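(* Let $\mathcal{A}$ be a nontrivial simplicial arrangement in $\mathbb{R}^n$ and let $\mathsf{h}$ be a closed halfspace that is generic with respect to $\mathcal{A}$. Let $\Sigma(\mathsf{h})$ be the set of faces of $\mathcal{A}$ contained in $\mathsf{h}$, let $f(\Sigma(\mathsf{h}),t)=\sum_{F\in\Sigma(\mathsf{h})} t^{\dim F}$ and $h(\Sigma(\mathsf{h}),t)=(1-t)^n f\big(\Sigma(\mathsf{h}),\tfrac{t}{1-t}\big)$. Then \[P_{\mathcal{A}}(z)=z^n\, h\big(\Sigma(\mathsf{h}),\tfrac{1}{z}\big).\]
   Context: A finite real linear (central) hyperplane arrangement $\mathcal{A}$ in $\mathbb{R}^n$ is a finite set of linear hyperplanes; it is nontrivial if it contains at least one hyperplane. Flats are intersections of subsets of hyperplanes of $\mathcal{A}$; they form a lattice $\mathcal{L}[\mathcal{A}]$ ordered by inclusion, with minimum $\bot=\bigcap\mathcal{A}$ and maximum $\mathbb{R}^n$. The Primitive Eulerian polynomial is $P_{\mathcal{A}}(z)=\sum_{\mathrm{X}\in\mathcal{L}[\mathcal{A}]}|\mu(\bot,\mathrm{X})|(z-1)^{\operatorname{codim}(\mathrm{X})}$, where $\mu$ is the Möbius function of $\mathcal{L}[\mathcal{A}]$. Regions are the closures of connected components of $\mathbb{R}^n\setminus\bigcup\mathcal{A}$; faces are the faces of regions (polyhedral cones), forming a complete fan whose minimal face is $\bot$. The rank of $\mathcal{A}$ is the rank of $\mathcal{L}[\mathcal{A}]$. $\mathcal{A}$ is simplicial if every region contains exactly $\operatorname{rank}(\mathcal{A})$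 faces of rank $1$ (of dimension $\dim\bot+1$). A hyperplane (not in $\mathcal{A}$) is generic with respect to $\mathcal{A}$ if it contains $\bot$ and contains no other flat of $\mathcal{A}$; a halfspace is generic if its bounding hyperplane is. Here $\dim F$ is the dimension of the face $F$ as a cone. *)

theory Defs
  imports "HOL-Analysis.Analysis"
begin

definition lin_hyperplane :: "'a::euclidean_space set \<Rightarrow> bool" where
  "lin_hyperplane H \<longleftrightarrow> (\<exists>a. a \<noteq> 0 \<and> H = {x. a \<bullet> x = 0})"

definition arrangement :: "'a::euclidean_space set set \<Rightarrow> bool" where
  "arrangement A \<longleftrightarrow> finite A \<and> (\<forall>H\<in>A. lin_hyperplane H)"

text \<open>Flats: intersections of subsets of the arrangement (the empty intersection is the whole space).\<close>
definition flats :: "'a::euclidean_space set set \<Rightarrow> 'a set set" where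
  "flats A = {\<Inter>B | B. B \<subseteq> A}"

definition bot_flat :: "'a::euclidean_space set set \<Rightarrow> 'a set" where
  "bot_flat A = \<Inter>A"

definition codim :: "'a::euclidean_space set \<Rightarrow> nat" where
  "codim X = DIM('a) - dim X"

function mobius :: "'a set set \<Rightarrow> 'a set \<Rightarrow> 'a set \<Rightarrow> int" where
  "mobius L x y =
     (if finite L \<and> x \<in> L \<and> y \<in> L \<and> x \<subseteq> y then
        (if x = y then 1 else - (\<Sum>z\<in>{z\<in>L. x \<subseteq> z \<and> z \<subset> y}. mobius L x z))
      else 0)"
  by auto
termination
proof (relation "Wellfounded.measure (\<lambda>(L, x, y). card {w\<in>L. w \<subset> y})")
  show "wf (Wellfounded.measure (\<lambda>(L, x, y). card {w\<in>L. w \<subset> y}))" by simp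
next
  fix L :: "'a set set" and x y z
  assume h: "finite L \<and> x \<in> L \<and> y \<in> L \<and> x \<subseteq> y" "x \<noteq> y"
     and z: "z \<in> {z\<in>L. x \<subseteq> z \<and> z \<subset> y}"
  have "{w\<in>L. w \<subset> z} \<subset> {w\<in>L. w \<subset> y}" using z by auto
  then have "card {w\<in>L. w \<subset> z} < card {w\<in>L. w \<subset> y}"
    using h by (intro psubset_card_mono) auto
  then show "((L, x, z), L, x, y) \<in> Wellfounded.measure (\<lambda>(L, x, y). card {w\<in>L. w \<subset> y})" by simp
qed

declare mobius.simps [simp del]

definition lattice_rank :: "'a set set \<Rightarrow> nat" where
  "lattice_rank L = Max {length xs | xs. set xs \<subseteq> L \<and> sorted_wrt (\<subset>) xs} - 1"

definition arr_rank :: "'a::euclidean_space set set \<Rightarrow> nat" where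
  "arr_rank A = lattice_rank (flats A)"

definition prim_eulerian :: "'a::euclidean_space set set \<Rightarrow> real \<Rightarrow> real" where
  "prim_eulerian A z =
     (\<Sum>X\<in>flats A. real_of_int \<bar>mobius (flats A) (bot_flat A) X\<bar> * (z - 1) ^ codim X)"

definition regions :: "'a::euclidean_space set set \<Rightarrow> 'a set set" where
  "regions A = {closure (connected_component_set (- \<Union>A) x) | x. x \<notin> \<Union>A}"

definition faces :: "'a::euclidean_space set set \<Rightarrow> 'a set set" where
  "faces A = {F. \<exists>R\<in>regions A. F face_of R \<and> F \<noteq> {}}"

definition simplicial :: "'a::euclidean_space set set \<Rightarrow> bool" where
  "simplicial A \<longleftrightarrow>
     (\<forall>R\<in>regions A. card {F. F face_of R \<and> F \<noteq> {} \<and> dim F = dim (bot_flat A) + 1} = arr_rank A)"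

definition generic_hyperplane :: "'a::euclidean_space set set \<Rightarrow> 'a set \<Rightarrow> bool" where
  "generic_hyperplane A H \<longleftrightarrow>
     H \<notin> A \<and> bot_flat A \<subseteq> H \<and> (\<forall>X\<in>flats A. X \<subseteq> H \<longrightarrow> X = bot_flat A)"

definition generic_halfspace :: "'a::euclidean_space set set \<Rightarrow> 'a set \<Rightarrow> bool" where
  "generic_halfspace A h \<longleftrightarrow>
     (\<exists>a c. a \<noteq> 0 \<and> h = {x. a \<bullet> x \<ge> c} \<and> generic_hyperplane A {x. a \<bullet> x = c})"

definition faces_in :: "'a::euclidean_space set set \<Rightarrow> 'a set \<Rightarrow> 'a set set" where
  "faces_in A h = {F\<in>faces A. F \<subseteq> h}"

definition f_poly :: "'a::euclidean_space set set \<Rightarrow> real \<Rightarrow> real" where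
  "f_poly \<Sigma> t = (\<Sum>F\<in>\<Sigma>. t ^ dim F)"

definition h_poly :: "'a::euclidean_space set set \<Rightarrow> real \<Rightarrow> real" where
  "h_poly \<Sigma> t = (1 - t) ^ DIM('a) * f_poly \<Sigma> (t / (1 - t))"

end

theory Submission
  imports Defs
begin

definition sign_cell :: "'a::euclidean_space set \<Rightarrow> 'a set \<Rightarrow> 'a \<Rightarrow> 'a set" where
  "sign_cell W V x = {y\<in>V. \<forall>w\<in>W. sgn (w \<bullet> y) = sgn (w \<bullet> x)}"

definition sign_cells :: "'a::euclidean_space set \<Rightarrow> 'a set \<Rightarrow> 'a set set" where
  "sign_cells W V = sign_cell W V ` V"

lemma sign_cell_self: "x \<in> V \<Longrightarrow> x \<in> sign_cell W V x"
  by (simp add: sign_cell_def)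

lemma sign_cell_subset: "sign_cell W V x \<subseteq> V"
  by (auto simp: sign_cell_def)

lemma sign_cell_eq: "y \<in> sign_cell W V x \<Longrightarrow> sign_cell W V y = sign_cell W V x"
  by (auto simp: sign_cell_def)

lemma sign_cell_sgn: "y \<in> sign_cell W V x \<Longrightarrow> w \<in> W \<Longrightarrow> sgn (w \<bullet> y) = sgn (w \<bullet> x)"
  by (simp add: sign_cell_def)

lemma sign_cell_zero_iff: "y \<in> sign_cell W V x \<Longrightarrow> w \<in> W \<Longrightarrow> w \<bullet> y = 0 \<longleftrightarrow> w \<bullet> x = 0"
  by (metis sgn_0_0 sign_cell_sgn)

lemma sign_cell_insert:
  "sign_cell (insert b W) V x = sign_cell W V x \<inter> {y. sgn (b \<bullet> y) = sgn (b \<bullet> x)}"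
  by (auto simp: sign_cell_def)

lemma sign_cells_disjoint:
  assumes "C \<in> sign_cells W V" "D \<in> sign_cells W V" "C \<inter> D \<noteq> {}"
  shows "C = D"
proof -
  obtain x y where "C = sign_cell W V x" "D = sign_cell W V y"
    using assms by (auto simp: sign_cells_def)
  then show ?thesis
    using assms(3) by (metis disjoint_iff sign_cell_eq)
qed

lemma finite_sign_cells:
  assumes "finite W"
  shows "finite (sign_cells W V)"
proof -
  let ?sv = "\<lambda>x. restrict (\<lambda>w. sgn (w \<bullet> x)) W"
  have "sign_cells W V \<subseteq> (\<lambda>s. {y\<in>V. ?sv y = s}) ` PiE W (\<lambda>_. {-1, 0, 1})"
  proof
    fix C assume "C \<in> sign_cells W V"
    then obtain x where "x \<in> V" "C = sign_cell W V x"
      by (auto simp: sign_cells_def)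
    then have "C = {y\<in>V. ?sv y = ?sv x}" and "?sv x \<in> PiE W (\<lambda>_. {-1, 0, 1})"
      by (auto simp: sign_cell_def fun_eq_iff sgn_real_def)
    then show "C \<in> (\<lambda>s. {y\<in>V. ?sv y = s}) ` PiE W (\<lambda>_. {-1, 0, 1})"
      by blast
  qed
  then show ?thesis
    using assms by (meson finite_PiE finite_imageI finite_insert finite.emptyI finite_subset)
qed

lemma sgn_inner_level_set:
  "{y. sgn (w \<bullet> y) = sgn (c::real)} =
     (if c > 0 then {y. w \<bullet> y > 0} else if c < 0 then {y. w \<bullet> y < 0} else {y. w \<bullet> y = 0})"
  by (auto simp: sgn_real_def split: if_splits)

lemma convex_sign_cell:
  assumes "subspace V"
  shows "convex (sign_cell W V x)"
proof -
  have "sign_cell W V x = V \<inter> (\<Inter>w\<in>W. {y. sgn (w \<bullet> y) = sgn (w \<bullet> x)})"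
    by (auto simp: sign_cell_def)
  moreover have "convex {y. sgn (w \<bullet> y) = sgn (w \<bullet> x)}" for w
    by (simp add: sgn_inner_level_set convex_halfspace_gt convex_halfspace_lt convex_hyperplane)
  ultimately show ?thesis
    using assms by (simp add: convex_INT convex_Int subspace_imp_convex)
qed

lemma sgn_inner_stable:
  fixes x d :: "'a::euclidean_space"
  assumes "finite W"
  obtains e where "e > 0"
    "\<And>t. \<bar>t\<bar> < e \<Longrightarrow> \<forall>w\<in>W. w \<bullet> x \<noteq> 0 \<longrightarrow> sgn (w \<bullet> (x + t *\<^sub>R d)) = sgn (w \<bullet> x)"
proof -
  have "eventually (\<lambda>t. w \<bullet> x \<noteq> 0 \<longrightarrow> sgn (w \<bullet> (x + t *\<^sub>R d)) = sgn (w \<bullet> x)) (nhds 0)" for w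
  proof -
    have "((\<lambda>t. w \<bullet> x + t * (w \<bullet> d)) \<longlongrightarrow> w \<bullet> x + 0 * (w \<bullet> d)) (nhds 0)"
      by (intro tendsto_add tendsto_mult tendsto_const filterlim_ident)
    then have lim: "((\<lambda>t. w \<bullet> x + t * (w \<bullet> d)) \<longlongrightarrow> w \<bullet> x) (nhds 0)"
      by simp
    consider "w \<bullet> x = 0" | "w \<bullet> x > 0" | "w \<bullet> x < 0" by linarith
    then show ?thesis
    proof cases
      case 2
      from order_tendstoD(1)[OF lim 2] show ?thesis
        by (rule eventually_mono) (simp add: inner_add_right 2)
    next
      case 3
      from order_tendstoD(2)[OF lim 3] show ?thesis
        by (rule eventually_mono) (simp add: inner_add_right 3)
    qed simp
  qed
  then have "eventually (\<lambda>t. \<forall>w\<in>W. w \<bullet> x \<noteq> 0 \<longrightarrow> sgn (w \<bullet> (x + t *\<^sub>R d)) = sgn (w \<bullet> x)) (nhds 0)"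
    using assms by (simp add: eventually_ball_finite)
  then obtain e where "e > 0"
    and "\<And>t. dist t 0 < e \<Longrightarrow> \<forall>w\<in>W. w \<bullet> x \<noteq> 0 \<longrightarrow> sgn (w \<bullet> (x + t *\<^sub>R d)) = sgn (w \<bullet> x)"
    unfolding eventually_nhds_metric by blast
  then show ?thesis
    by (intro that[of e]) (auto simp: dist_real_def)
qed

lemma sign_cell_extend:
  assumes "finite W" "subspace V" "y \<in> V" "d \<in> V" "\<forall>w\<in>W. w \<bullet> y = 0 \<longrightarrow> w \<bullet> d = 0"
  obtains t where "t > 0" "y + t *\<^sub>R d \<in> sign_cell W V y"
proof -
  obtain e where "e > 0"
    and e: "\<And>t. \<bar>t\<bar> < e \<Longrightarrow> \<forall>w\<in>W. w \<bullet> y \<noteq> 0 \<longrightarrow> sgn (w \<bullet> (y + t *\<^sub>R d)) = sgn (w \<bullet> y)"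
    using sgn_inner_stable[OF assms(1)] by blast
  have "y + (e / 2) *\<^sub>R d \<in> sign_cell W V y"
    using assms(2-5) e[of "e / 2"] \<open>e > 0\<close>
    by (auto simp: sign_cell_def inner_add_right subspace_add subspace_scale)
  then show ?thesis
    using that[of "e / 2"] \<open>e > 0\<close> by auto
qed

lemma span_sign_cell:
  assumes "finite W" "subspace V" "x \<in> V"
  shows "span (sign_cell W V x) = {y\<in>V. \<forall>w\<in>W. w \<bullet> x = 0 \<longrightarrow> w \<bullet> y = 0}" (is "_ = ?L")
proof
  have "subspace ?L"
    using assms(2) by (auto simp: subspace_def inner_add_right)
  moreover have "sign_cell W V x \<subseteq> ?L"
    by (auto simp: sign_cell_def) (metis sgn_0_0)
  ultimately show "span (sign_cell W V x) \<subseteq> ?L"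
    by (rule span_minimal[rotated])
next
  show "?L \<subseteq> span (sign_cell W V x)"
  proof
    fix y assume "y \<in> ?L"
    then obtain t where "t > 0" and t: "x + t *\<^sub>R y \<in> sign_cell W V x"
      using sign_cell_extend[OF assms(1,2,3)] by blast
    have "y = (1 / t) *\<^sub>R ((x + t *\<^sub>R y) - x)"
      using \<open>t > 0\<close> by simp
    also have "\<dots> \<in> span (sign_cell W V x)"
      using t sign_cell_self[OF assms(3)] by (intro span_mul span_diff span_base)
    finally show "y \<in> span (sign_cell W V x)" .
  qed
qed

lemma dim_Int_hyperplane:
  fixes b :: "'a::euclidean_space"
  assumes "subspace L" "p \<in> L" "b \<bullet> p \<noteq> 0"
  shows "dim (L \<inter> {u. b \<bullet> u = 0}) + 1 = dim L"
proof -
  have "0 \<in> L \<inter> {u. b \<bullet> u = 0}" and "\<not> L \<subseteq> {u. b \<bullet> u = 0}"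
    using assms by (auto simp: subspace_0)
  then have "aff_dim (L \<inter> {u. b \<bullet> u = 0}) = aff_dim L - 1"
    using aff_dim_affine_Int_hyperplane[OF subspace_imp_affine[OF assms(1)], of b 0]
    by (metis empty_iff)
  moreover have "subspace (L \<inter> {u. b \<bullet> u = 0})"
    using assms(1) by (simp add: subspace_inter subspace_hyperplane)
  ultimately show ?thesis
    using assms(1) by (simp add: aff_dim_subspace)
qed

lemma span_sign_cell_insert:
  assumes "finite W" "subspace V" "y \<in> V"
  shows "span (sign_cell (insert b W) V y) = span (sign_cell W V y) \<inter> {u. b \<bullet> y = 0 \<longrightarrow> b \<bullet> u = 0}"
  using assms by (auto simp: span_sign_cell)

lemma sign_cell_opposite_signs:
  assumes "finite W" "subspace V" "x \<in> V" "y \<in> sign_cell W V x" "sgn (b \<bullet> y) \<noteq> sgn (b \<bullet> x)"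
  obtains p m where "p \<in> sign_cell W V x" "b \<bullet> p > 0" "m \<in> sign_cell W V x" "b \<bullet> m < 0"
proof -
  let ?C = "sign_cell W V x"
  have reflect: "\<exists>q'\<in>?C. (b \<bullet> q') * (b \<bullet> q) < 0"
    if u: "u \<in> ?C" "b \<bullet> u = 0" and q: "q \<in> ?C" "b \<bullet> q \<noteq> 0" for u q
  proof -
    have "u \<in> V" "u - q \<in> V"
      using u q assms(2) sign_cell_subset by (blast, metis subsetD subspace_diff)
    moreover have "\<forall>w\<in>W. w \<bullet> u = 0 \<longrightarrow> w \<bullet> (u - q) = 0"
      using u q by (auto simp: inner_diff_right dest: sign_cell_zero_iff)
    ultimately obtain t where "t > 0" and t: "u + t *\<^sub>R (u - q) \<in> sign_cell W V u"
      using sign_cell_extend[OF assms(1,2)] by blast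
    have "(b \<bullet> (u + t *\<^sub>R (u - q))) * (b \<bullet> q) = - t * (b \<bullet> q)\<^sup>2"
      using u(2) by (simp add: inner_add_right inner_diff_right power2_eq_square)
    also have "\<dots> < 0"
      using \<open>t > 0\<close> q(2) by simp
    finally show ?thesis
      using t sign_cell_eq[OF u(1)] by auto
  qed
  have "\<exists>u\<in>?C. \<exists>v\<in>?C. (b \<bullet> u) * (b \<bullet> v) < 0"
  proof -
    have x: "x \<in> ?C"
      using assms(3) by (rule sign_cell_self)
    consider "b \<bullet> x = 0" | "b \<bullet> y = 0" | "b \<bullet> x \<noteq> 0" "b \<bullet> y \<noteq> 0"
      by blast
    then show ?thesis
    proof cases
      case 3
      then have "(b \<bullet> y) * (b \<bullet> x) < 0"
        using assms(5) by (auto simp: sgn_real_def mult_less_0_iff split: if_splits)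
      then show ?thesis
        using x assms(4) by blast
    qed (use reflect x assms(4,5) in fastforce)+
  qed
  then show ?thesis
    using that by (metis mult_less_0_iff)
qed

lemma convex_slice_subset_halfspace:
  fixes a b :: "'a::euclidean_space"
  assumes "convex C" "q \<in> C" "b \<bullet> q > 0" "C \<inter> {u. b \<bullet> u > 0} \<subseteq> {u. a \<bullet> u \<ge> 0}"
  shows "C \<inter> {u. b \<bullet> u = 0} \<subseteq> {u. a \<bullet> u \<ge> 0}"
proof
  fix y assume y: "y \<in> C \<inter> {u. b \<bullet> u = 0}"
  have "open_segment y q \<subseteq> C \<inter> {u. b \<bullet> u > 0}"
  proof
    fix u assume "u \<in> open_segment y q"
    then obtain t where "0 < t" "t < 1" "u = (1 - t) *\<^sub>R y + t *\<^sub>R q"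
      by (auto simp: in_segment)
    moreover have "u \<in> C"
      using \<open>u \<in> open_segment y q\<close> y assms(1,2) closed_segment_subset open_closed_segment by blast
    ultimately show "u \<in> C \<inter> {u. b \<bullet> u > 0}"
      using y assms(3) by (simp add: inner_add_right)
  qed
  then have "closure (open_segment y q) \<subseteq> {u. a \<bullet> u \<ge> 0}"
    using assms(4) closed_halfspace_ge by (metis closure_minimal order_trans)
  moreover have "y \<noteq> q"
    using y assms(3) by auto
  ultimately show "y \<in> {u. a \<bullet> u \<ge> 0}"
    by auto
qed

lemma convex_slice_halfspace_cases:
  fixes a b :: "'a::euclidean_space"
  assumes "convex C" "C \<inter> {u. b \<bullet> u = 0} \<subseteq> {u. a \<bullet> u \<ge> 0}"
  shows "C \<inter> {u. b \<bullet> u > 0} \<subseteq> {u. a \<bullet> u \<ge> 0} \<or> C \<inter> {u. b \<bullet> u < 0} \<subseteq> {u. a \<bullet> u \<ge> 0}"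
proof (rule ccontr)
  assume "\<not> ?thesis"
  then obtain u v where u: "u \<in> C" "b \<bullet> u > 0" "a \<bullet> u < 0" and v: "v \<in> C" "b \<bullet> v < 0" "a \<bullet> v < 0"
    unfolding subset_iff by (auto simp: not_le)
  obtain z where z: "z \<in> closed_segment v u" "b \<bullet> z = 0"
    using connected_ivt_hyperplane[of "closed_segment v u" v u b 0] u v by auto
  have "closed_segment v u \<subseteq> C \<inter> {z. a \<bullet> z < 0}"
    using u v assms(1) by (intro closed_segment_subset) (auto intro: convex_Int convex_halfspace_lt)
  then have "z \<in> C" "a \<bullet> z < 0"
    using z(1) by auto
  moreover have "a \<bullet> z \<ge> 0"
    using assms(2) calculation(1) z(2) by blast
  ultimately show False
    by linarith
qed

definition euler_weight :: "'a::euclidean_space \<Rightarrow> 'a set \<Rightarrow> int" where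
  "euler_weight a D = (if D \<subseteq> {z. a \<bullet> z \<ge> 0} then (-1) ^ dim D else 0)"

lemma euler_weight_slices:
  fixes a b :: "'a::euclidean_space"
  assumes "convex C" "p \<in> C" "b \<bullet> p > 0" "m \<in> C" "b \<bullet> m < 0"
    and "dim (C \<inter> {u. b \<bullet> u > 0}) = dim C" "dim (C \<inter> {u. b \<bullet> u < 0}) = dim C"
    and "dim (C \<inter> {u. b \<bullet> u = 0}) + 1 = dim C"
  shows "euler_weight a (C \<inter> {u. b \<bullet> u > 0}) + euler_weight a (C \<inter> {u. b \<bullet> u = 0})
           + euler_weight a (C \<inter> {u. b \<bullet> u < 0}) = euler_weight a C"
proof -
  define P Z M where "P = C \<inter> {u. b \<bullet> u > 0}" and "Z = C \<inter> {u. b \<bullet> u = 0}"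
    and "M = C \<inter> {u. b \<bullet> u < 0}"
  let ?h = "{u. a \<bullet> u \<ge> 0}"
  have "P \<subseteq> ?h \<Longrightarrow> Z \<subseteq> ?h"
    using convex_slice_subset_halfspace[OF assms(1-3)] by (simp add: P_def Z_def)
  moreover have "M \<subseteq> ?h \<Longrightarrow> Z \<subseteq> ?h"
    using convex_slice_subset_halfspace[OF assms(1,4), of "- b"] assms(5) by (simp add: M_def Z_def)
  moreover have "Z \<subseteq> ?h \<Longrightarrow> P \<subseteq> ?h \<or> M \<subseteq> ?h"
    using convex_slice_halfspace_cases[OF assms(1)] by (simp add: P_def Z_def M_def)
  moreover have "C = P \<union> Z \<union> M"
    by (auto simp: P_def Z_def M_def)
  then have "C \<subseteq> ?h \<longleftrightarrow> P \<subseteq> ?h \<and> Z \<subseteq> ?h \<and> M \<subseteq> ?h"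
    by blast
  moreover have "dim P = Suc (dim Z)" "dim M = Suc (dim Z)" "dim C = Suc (dim Z)"
    using assms(6-8) by (simp_all add: P_def Z_def M_def)
  ultimately show ?thesis
    unfolding P_def[symmetric] Z_def[symmetric] M_def[symmetric] euler_weight_def
    by (cases "P \<subseteq> ?h"; cases "M \<subseteq> ?h") auto
qed

lemma sum_euler_weight_refine:
  assumes "finite W" "subspace V" "x \<in> V"
  shows "(\<Sum>D\<in>sign_cell (insert b W) V ` sign_cell W V x. euler_weight a D)
           = euler_weight a (sign_cell W V x)"
proof -
  let ?C = "sign_cell W V x"
  let ?D = "sign_cell (insert b W) V"
  have refine: "?D u = ?C \<inter> {v. sgn (b \<bullet> v) = sgn (b \<bullet> u)}" if "u \<in> ?C" for u
    using sign_cell_insert[of b W V u] sign_cell_eq[OF that] by simp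
  show ?thesis
  proof (cases "\<forall>y\<in>?C. sgn (b \<bullet> y) = sgn (b \<bullet> x)")
    case True
    have "?D ` ?C = (\<lambda>_. ?C) ` ?C"
      using refine True by (intro image_cong) auto
    also have "\<dots> = {?C}"
      using sign_cell_self[OF assms(3)] by (rule image_constant)
    finally show ?thesis
      by simp
  next
    case False
    then obtain y where "y \<in> ?C" "sgn (b \<bullet> y) \<noteq> sgn (b \<bullet> x)"
      by blast
    then obtain p m where p: "p \<in> ?C" "b \<bullet> p > 0" and m: "m \<in> ?C" "b \<bullet> m < 0"
      by (rule sign_cell_opposite_signs[OF assms])
    obtain z where z: "z \<in> ?C" "b \<bullet> z = 0"
      using connected_ivt_hyperplane[of ?C m p b 0] p m
        convex_connected[OF convex_sign_cell[OF assms(2)]] by auto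
    define P Z M where "P = ?C \<inter> {v. b \<bullet> v > 0}" and "Z = ?C \<inter> {v. b \<bullet> v = 0}"
      and "M = ?C \<inter> {v. b \<bullet> v < 0}"
    have pieces: "?D u = (if b \<bullet> u > 0 then P else if b \<bullet> u = 0 then Z else M)" if "u \<in> ?C" for u
      using that by (simp add: refine sgn_inner_level_set P_def Z_def M_def)
    then have DP: "?D p = P" and DZ: "?D z = Z" and DM: "?D m = M"
      using p z m by simp_all
    have img: "?D ` ?C = {P, Z, M}"
    proof
      show "?D ` ?C \<subseteq> {P, Z, M}"
        using pieces by auto
      show "{P, Z, M} \<subseteq> ?D ` ?C"
        using p(1) z(1) m(1) DP DZ DM by blast
    qed
    have "p \<in> P" "z \<in> Z" "m \<in> M" "p \<notin> Z" "p \<notin> M" "z \<notin> M"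
      using p z m by (simp_all add: P_def Z_def M_def)
    then have "P \<noteq> Z" "P \<noteq> M" "Z \<noteq> M"
      by blast+
    then have sum3: "(\<Sum>D\<in>?D ` ?C. euler_weight a D)
                        = euler_weight a P + euler_weight a Z + euler_weight a M"
      by (simp add: img)
    have span_D: "span (?D u) = span ?C \<inter> {v. b \<bullet> u = 0 \<longrightarrow> b \<bullet> v = 0}" if "u \<in> ?C" for u
    proof -
      have "u \<in> V"
        using that sign_cell_subset by blast
      then show ?thesis
        using span_sign_cell_insert[OF assms(1,2)] sign_cell_eq[OF that] by simp
    qed
    have "span P = span ?C" "span M = span ?C"
      using span_D[OF p(1)] span_D[OF m(1)] p(2) m(2) by (simp_all flip: DP DM)
    then have "dim P = dim ?C" "dim M = dim ?C"
      by (metis dim_span)+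
    moreover have "span Z = span ?C \<inter> {v. b \<bullet> v = 0}"
      using span_D[OF z(1)] z(2) by (simp flip: DZ)
    then have "dim Z + 1 = dim ?C"
      using dim_Int_hyperplane[OF subspace_span span_base[OF p(1)], of b] p(2) by (metis dim_span less_irrefl)
    ultimately have "euler_weight a P + euler_weight a Z + euler_weight a M = euler_weight a ?C"
      unfolding P_def Z_def M_def by (rule euler_weight_slices[OF convex_sign_cell[OF assms(2)] p m])
    with sum3 show ?thesis
      by simp
  qed
qed

lemma sign_cells_insert:
  "sign_cells (insert b W) V = (\<Union>C\<in>sign_cells W V. sign_cell (insert b W) V ` C)"
proof
  show "sign_cells (insert b W) V \<subseteq> (\<Union>C\<in>sign_cells W V. sign_cell (insert b W) V ` C)"
    unfolding sign_cells_def using sign_cell_self by blast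
  show "(\<Union>C\<in>sign_cells W V. sign_cell (insert b W) V ` C) \<subseteq> sign_cells (insert b W) V"
    unfolding sign_cells_def using sign_cell_subset by blast
qed

lemma sum_euler_weight_sign_cells_insert:
  assumes "finite W" "subspace V"
  shows "(\<Sum>D\<in>sign_cells (insert b W) V. euler_weight a D) = (\<Sum>C\<in>sign_cells W V. euler_weight a C)"
proof -
  let ?D = "sign_cell (insert b W) V"
  have "(\<Sum>D\<in>sign_cells (insert b W) V. euler_weight a D)
          = (\<Sum>C\<in>sign_cells W V. \<Sum>D\<in>?D ` C. euler_weight a D)"
    unfolding sign_cells_insert
  proof (rule sum.UNION_disjoint)
    show "finite (sign_cells W V)"
      using assms(1) by (rule finite_sign_cells)
    show "\<forall>C\<in>sign_cells W V. finite (?D ` C)"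
    proof
      fix C assume "C \<in> sign_cells W V"
      then have "?D ` C \<subseteq> sign_cells (insert b W) V"
        using sign_cell_subset unfolding sign_cells_def by blast
      then show "finite (?D ` C)"
        using finite_sign_cells[of "insert b W" V] assms(1) finite_subset by auto
    qed
    show "\<forall>C\<in>sign_cells W V. \<forall>C'\<in>sign_cells W V. C \<noteq> C' \<longrightarrow> ?D ` C \<inter> ?D ` C' = {}"
    proof (intro ballI impI)
      fix C C' assume C: "C \<in> sign_cells W V" "C' \<in> sign_cells W V" "C \<noteq> C'"
      have "u \<in> C'" if "u \<in> C" "u' \<in> C'" "?D u = ?D u'" for u u'
      proof -
        have "u \<in> ?D u"
          using that(1) C(1) by (auto simp: sign_cells_def intro: sign_cell_self dest: sign_cell_subset[THEN subsetD])
        also have "?D u \<subseteq> sign_cell W V u'"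
          using that(3) by (simp add: sign_cell_insert)
        also have "sign_cell W V u' = C'"
          using that(2) C(2) by (auto simp: sign_cells_def dest: sign_cell_eq)
        finally show ?thesis .
      qed
      then show "?D ` C \<inter> ?D ` C' = {}"
        using sign_cells_disjoint[OF C(1,2)] C(3) by blast
    qed
  qed
  also have "\<dots> = (\<Sum>C\<in>sign_cells W V. euler_weight a C)"
    using sum_euler_weight_refine[OF assms] by (auto simp: sign_cells_def intro!: sum.cong)
  finally show ?thesis .
qed

theorem sum_euler_weight_sign_cells:
  assumes "finite W" "subspace V" "v \<in> V" "a \<bullet> v < 0"
  shows "(\<Sum>C\<in>sign_cells W V. euler_weight a C) = 0"
  using assms(1)
proof (induction W rule: finite_induct)
  case empty
  have "sign_cells {} V = {V}"
    using assms(3) by (auto simp: sign_cells_def sign_cell_def)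
  moreover have "\<not> V \<subseteq> {z. a \<bullet> z \<ge> 0}"
    using assms(3,4) by auto
  ultimately show ?case
    by (simp add: euler_weight_def)
next
  case (insert b W)
  then show ?case
    using sum_euler_weight_sign_cells_insert[OF insert(1) assms(2)] by simp
qed

definition closed_sign_cell :: "'a::euclidean_space set \<Rightarrow> 'a \<Rightarrow> 'a set" where
  "closed_sign_cell W x = {z. \<forall>w\<in>W. w \<bullet> z = 0 \<or> sgn (w \<bullet> z) = sgn (w \<bullet> x)}"

lemma closed_sgn_inner_level_set:
  "{z. w \<bullet> z = 0 \<or> sgn (w \<bullet> z) = sgn (c::real)} =
     (if c > 0 then {z. w \<bullet> z \<ge> 0} else if c < 0 then {z. w \<bullet> z \<le> 0} else {z. w \<bullet> z = 0})"
  by (auto simp: sgn_real_def split: if_splits)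

lemma closed_sign_cell_Inter:
  "closed_sign_cell W x = (\<Inter>w\<in>W. {z. w \<bullet> z = 0 \<or> sgn (w \<bullet> z) = sgn (w \<bullet> x)})"
  by (auto simp: closed_sign_cell_def)

lemma closed_closed_sign_cell: "closed (closed_sign_cell W x)"
  unfolding closed_sign_cell_Inter closed_sgn_inner_level_set
  by (intro closed_INT) (simp add: closed_halfspace_ge closed_halfspace_le closed_hyperplane)

lemma convex_closed_sign_cell: "convex (closed_sign_cell W x)"
  unfolding closed_sign_cell_Inter closed_sgn_inner_level_set
  by (intro convex_INT) (simp add: convex_halfspace_ge convex_halfspace_le convex_hyperplane)

lemma sign_cell_subset_closed_sign_cell: "sign_cell W V x \<subseteq> closed_sign_cell W x"
  by (auto simp: sign_cell_def closed_sign_cell_def)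

lemma closed_sign_cell_mono:
  "y \<in> closed_sign_cell W x \<Longrightarrow> closed_sign_cell W y \<subseteq> closed_sign_cell W x"
  by (auto simp: closed_sign_cell_def) (metis sgn_0_0)

lemma closed_sign_cell_eqD:
  assumes "closed_sign_cell W x = closed_sign_cell W y"
  shows "sign_cell W V x = sign_cell W V y"
proof -
  have "x \<in> closed_sign_cell W y" "y \<in> closed_sign_cell W x"
    using assms by (auto simp: closed_sign_cell_def)
  then have "sgn (w \<bullet> x) = sgn (w \<bullet> y)" if "w \<in> W" for w
    using that by (auto simp: closed_sign_cell_def) (metis sgn_0_0)+
  then show ?thesis
    by (auto simp: sign_cell_def)
qed

lemma sgn_convex_combination:
  fixes p q t :: real
  assumes "0 < t" "t \<le> 1" "p = 0 \<or> sgn p = sgn q"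
  shows "sgn ((1 - t) * p + t * q) = sgn q"
proof (cases q "0::real" rule: linorder_cases)
  case less
  then have "p \<le> 0"
    using assms(3) by (auto simp: sgn_real_def split: if_splits)
  then have "(1 - t) * p + t * q < 0"
    using assms(1,2) less by (smt (verit) mult_nonneg_nonpos mult_pos_neg)
  then show ?thesis
    using less by simp
next
  case greater
  then have "p \<ge> 0"
    using assms(3) by (auto simp: sgn_real_def split: if_splits)
  then have "(1 - t) * p + t * q > 0"
    using assms(1,2) greater by (smt (verit) mult_nonneg_nonneg mult_pos_pos)
  then show ?thesis
    using greater by simp
qed (use assms(3) in \<open>auto simp: sgn_0_0\<close>)

lemma open_segment_subset_sign_cell:
  assumes "z \<in> closed_sign_cell W y"
  shows "open_segment z y \<subseteq> sign_cell W UNIV y"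
proof
  fix u assume "u \<in> open_segment z y"
  then obtain t where t: "0 < t" "t < 1" "u = (1 - t) *\<^sub>R z + t *\<^sub>R y"
    by (auto simp: in_segment)
  have "sgn (w \<bullet> u) = sgn (w \<bullet> y)" if "w \<in> W" for w
    using sgn_convex_combination[of t "w \<bullet> z" "w \<bullet> y"] assms that t
    by (simp add: closed_sign_cell_def inner_add_right)
  then show "u \<in> sign_cell W UNIV y"
    by (simp add: sign_cell_def)
qed

lemma closure_sign_cell: "closure (sign_cell W UNIV y) = closed_sign_cell W y"
proof
  show "closure (sign_cell W UNIV y) \<subseteq> closed_sign_cell W y"
    by (intro closure_minimal sign_cell_subset_closed_sign_cell closed_closed_sign_cell)
  show "closed_sign_cell W y \<subseteq> closure (sign_cell W UNIV y)"
  proof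
    fix z assume z: "z \<in> closed_sign_cell W y"
    show "z \<in> closure (sign_cell W UNIV y)"
    proof (cases "z = y")
      case True
      then show ?thesis
        using sign_cell_self[of y UNIV W] closure_subset by blast
    next
      case False
      have "closure (open_segment z y) \<subseteq> closure (sign_cell W UNIV y)"
        using open_segment_subset_sign_cell[OF z] by (rule closure_mono)
      then show ?thesis
        using False by auto
    qed
  qed
qed

lemma face_of_closed_sign_cell:
  assumes "y \<in> closed_sign_cell W x"
  shows "closed_sign_cell W y face_of closed_sign_cell W x"
proof -
  let ?K = "closed_sign_cell W x"
  have hyp: "?K \<inter> {z. w \<bullet> z = 0} face_of ?K" if "w \<in> W" for w
  proof (cases "w \<bullet> x" "0::real" rule: linorder_cases)
    case less
    then have "\<forall>z\<in>?K. w \<bullet> z \<le> 0"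
      using that by (auto simp: closed_sign_cell_def sgn_real_def split: if_splits)
    then show ?thesis
      using face_of_Int_supporting_hyperplane_le[OF convex_closed_sign_cell] by blast
  next
    case equal
    then have "?K \<inter> {z. w \<bullet> z = 0} = ?K"
      using that by (auto simp: closed_sign_cell_def) (metis sgn_0_0 sgn_zero)
    then show ?thesis
      by (simp add: face_of_refl convex_closed_sign_cell)
  next
    case greater
    then have "\<forall>z\<in>?K. w \<bullet> z \<ge> 0"
      using that by (auto simp: closed_sign_cell_def sgn_real_def split: if_splits)
    then show ?thesis
      using face_of_Int_supporting_hyperplane_ge[OF convex_closed_sign_cell] by blast
  qed
  let ?F = "insert ?K ((\<lambda>w. ?K \<inter> {z. w \<bullet> z = 0}) ` {w\<in>W. w \<bullet> y = 0})"
  have faces: "F face_of ?K" if "F \<in> ?F" for F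
    using that hyp face_of_refl[OF convex_closed_sign_cell] by blast
  have "closed_sign_cell W y = \<Inter>?F"
    using assms closed_sign_cell_mono[OF assms]
    by (auto simp: closed_sign_cell_def) (metis sgn_0_0)+
  then show ?thesis
    using face_of_Inter[OF insert_not_empty faces] by (simp only:)
qed

lemma face_of_closed_sign_cell_obtains:
  assumes "finite W" "F face_of closed_sign_cell W x" "F \<noteq> {}"
  obtains y where "F = closed_sign_cell W y"
proof -
  let ?K = "closed_sign_cell W x"
  have F: "convex F" "F \<subseteq> ?K"
    using assms(2) by (auto dest: face_of_imp_convex face_of_imp_subset)
  then obtain y where y: "y \<in> rel_interior F"
    using assms(3) rel_interior_eq_empty by blast
  then have "y \<in> F"
    using rel_interior_subset by blast
  have "F \<subseteq> closed_sign_cell W y"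
  proof
    fix z assume "z \<in> F"
    then obtain e where "e > 1" and q: "(1 - e) *\<^sub>R z + e *\<^sub>R y \<in> F"
      using y F(1) assms(3) convex_rel_interior_iff by blast
    have "sgn (w \<bullet> z) = sgn (w \<bullet> y)" if "w \<in> W" "w \<bullet> z \<noteq> 0" for w
    proof -
      have "w \<bullet> y \<noteq> 0"
      proof
        assume "w \<bullet> y = 0"
        then have "sgn (w \<bullet> ((1 - e) *\<^sub>R z + e *\<^sub>R y)) = - sgn (w \<bullet> z)"
          using \<open>e > 1\<close> by (simp add: inner_add_right sgn_mult)
        moreover have "w \<bullet> ((1 - e) *\<^sub>R z + e *\<^sub>R y) = 0 \<or> sgn (w \<bullet> ((1 - e) *\<^sub>R z + e *\<^sub>R y)) = sgn (w \<bullet> x)"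
          "sgn (w \<bullet> z) = sgn (w \<bullet> x)"
          using q \<open>z \<in> F\<close> F(2) that by (auto simp: closed_sign_cell_def)
        ultimately show False
          using that(2) by (auto simp: sgn_0_0)
      qed
      moreover have "w \<bullet> y = 0 \<or> sgn (w \<bullet> y) = sgn (w \<bullet> x)" "sgn (w \<bullet> z) = sgn (w \<bullet> x)"
        using \<open>z \<in> F\<close> \<open>y \<in> F\<close> F(2) that by (auto simp: closed_sign_cell_def)
      ultimately show ?thesis
        by simp
    qed
    then show "z \<in> closed_sign_cell W y"
      by (auto simp: closed_sign_cell_def)
  qed
  moreover have "closed_sign_cell W y \<subseteq> F"
  proof
    fix z assume z: "z \<in> closed_sign_cell W y"
    have "\<forall>w\<in>W. w \<bullet> y = 0 \<longrightarrow> w \<bullet> (y - z) = 0"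
      using z by (auto simp: closed_sign_cell_def inner_diff_right sgn_0_0)
    then obtain t where "t > 0" and u: "y + t *\<^sub>R (y - z) \<in> sign_cell W UNIV y"
      using sign_cell_extend[OF assms(1) subspace_UNIV] by blast
    have Ky: "closed_sign_cell W y \<subseteq> ?K"
      using \<open>y \<in> F\<close> F(2) closed_sign_cell_mono by blast
    show "z \<in> F"
    proof (cases "z = y")
      case False
      have "(1 - 1 / (1 + t)) *\<^sub>R z + (1 / (1 + t)) *\<^sub>R (y + t *\<^sub>R (y - z))
              = (1 / (1 + t)) *\<^sub>R ((1 + t) *\<^sub>R y)"
        using \<open>t > 0\<close> by (simp add: field_simps scaleR_add_right)
      then have "y = (1 - 1 / (1 + t)) *\<^sub>R z + (1 / (1 + t)) *\<^sub>R (y + t *\<^sub>R (y - z))"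
        using \<open>t > 0\<close> by simp
      moreover have "z \<noteq> y + t *\<^sub>R (y - z)"
      proof
        assume "z = y + t *\<^sub>R (y - z)"
        then have "(1 + t) *\<^sub>R (z - y) = 0"
          by (simp add: algebra_simps)
        then show False
          using \<open>t > 0\<close> False by simp
      qed
      ultimately have "y \<in> open_segment z (y + t *\<^sub>R (y - z))"
        using \<open>t > 0\<close> unfolding in_segment(2) by (intro conjI exI[of _ "1 / (1 + t)"]) auto
      then show ?thesis
        using face_ofD[OF assms(2)] z u Ky sign_cell_subset_closed_sign_cell \<open>y \<in> F\<close> by blast
    qed (use \<open>y \<in> F\<close> in simp)
  qed
  ultimately show ?thesis
    using that by blast
qed

lemma closed_sign_cell_perturb:
  assumes "finite W" "\<forall>w\<in>W. w \<bullet> g \<noteq> 0"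
  obtains x where "\<forall>w\<in>W. w \<bullet> x \<noteq> 0" "y \<in> closed_sign_cell W x"
proof -
  obtain e where "e > 0"
    and "\<And>t. \<bar>t\<bar> < e \<Longrightarrow> \<forall>w\<in>W. w \<bullet> y \<noteq> 0 \<longrightarrow> sgn (w \<bullet> (y + t *\<^sub>R g)) = sgn (w \<bullet> y)"
    using sgn_inner_stable[OF assms(1)] by blast
  then have e: "\<forall>w\<in>W. w \<bullet> y \<noteq> 0 \<longrightarrow> sgn (w \<bullet> (y + (e / 2) *\<^sub>R g)) = sgn (w \<bullet> y)"
    by simp
  have "w \<bullet> (y + (e / 2) *\<^sub>R g) \<noteq> 0" if "w \<in> W" for w
    using e assms(2) \<open>e > 0\<close> that by (cases "w \<bullet> y = 0") (auto simp: inner_add_right sgn_0_0)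
  moreover have "y \<in> closed_sign_cell W (y + (e / 2) *\<^sub>R g)"
    using e by (auto simp: closed_sign_cell_def)
  ultimately show ?thesis
    using that by blast
qed

lemma exists_generic_vector:
  fixes W :: "'a::euclidean_space set"
  assumes "finite W" "0 \<notin> W"
  obtains g where "\<forall>w\<in>W. w \<bullet> g \<noteq> 0"
proof -
  have "negligible (\<Union>w\<in>W. {z. w \<bullet> z = 0})"
    using assms by (intro negligible_Union) (auto intro: negligible_hyperplane)
  moreover have "\<not> negligible (UNIV :: 'a set)"
    using negligible_convex_interior[of "UNIV :: 'a set"] by simp
  ultimately obtain g where "g \<notin> (\<Union>w\<in>W. {z. w \<bullet> z = 0})"
    by (metis UNIV_eq_I)
  then show ?thesis
    using that by blast
qed

lemma connected_component_sign_cell: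
  assumes "\<forall>w\<in>W. w \<bullet> x \<noteq> 0"
  shows "connected_component_set (- (\<Union>w\<in>W. {z. w \<bullet> z = 0})) x = sign_cell W UNIV x"
    (is "?K = ?C")
proof
  have "?C \<subseteq> - (\<Union>w\<in>W. {z. w \<bullet> z = 0})"
  proof
    fix z assume "z \<in> ?C"
    then have "w \<bullet> z \<noteq> 0" if "w \<in> W" for w
      using assms that sign_cell_zero_iff by blast
    then show "z \<in> - (\<Union>w\<in>W. {z. w \<bullet> z = 0})"
      by blast
  qed
  then show "?C \<subseteq> ?K"
    by (intro connected_component_maximal sign_cell_self convex_connected convex_sign_cell)
      (simp_all add: subspace_UNIV)
next
  have x: "x \<in> ?K"
    using assms by (auto simp: connected_component_refl_eq)
  show "?K \<subseteq> ?C"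
  proof
    fix z assume z: "z \<in> ?K"
    have "sgn (w \<bullet> z) = sgn (w \<bullet> x)" if "w \<in> W" for w
    proof (rule ccontr)
      assume "sgn (w \<bullet> z) \<noteq> sgn (w \<bullet> x)"
      then have "w \<bullet> z \<le> 0 \<and> 0 \<le> w \<bullet> x \<or> w \<bullet> x \<le> 0 \<and> 0 \<le> w \<bullet> z"
        by (auto simp: sgn_real_def split: if_splits)
      then obtain u where "u \<in> ?K" "w \<bullet> u = 0"
        using connected_ivt_hyperplane[OF connected_connected_component z x]
          connected_ivt_hyperplane[OF connected_connected_component x z] by blast
      then show False
        using connected_component_subset that by blast
    qed
    then show "z \<in> ?C"
      by (simp add: sign_cell_def)
  qed
qed

definition hyperplane_normal :: "'a::euclidean_space set \<Rightarrow> 'a" where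
  "hyperplane_normal H = (SOME a. a \<noteq> 0 \<and> H = {x. a \<bullet> x = 0})"

lemma hyperplane_normal:
  assumes "lin_hyperplane H"
  shows "hyperplane_normal H \<noteq> 0" "H = {x. hyperplane_normal H \<bullet> x = 0}"
proof -
  have "\<exists>a. a \<noteq> 0 \<and> H = {x. a \<bullet> x = 0}"
    using assms by (simp add: lin_hyperplane_def)
  then have "hyperplane_normal H \<noteq> 0 \<and> H = {x. hyperplane_normal H \<bullet> x = 0}"
    unfolding hyperplane_normal_def by (rule someI_ex)
  then show "hyperplane_normal H \<noteq> 0" "H = {x. hyperplane_normal H \<bullet> x = 0}"
    by auto
qed

definition arr_normals :: "'a::euclidean_space set set \<Rightarrow> 'a set" where
  "arr_normals A = hyperplane_normal ` A"

lemma finite_arr_normals: "arrangement A \<Longrightarrow> finite (arr_normals A)"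
  by (simp add: arrangement_def arr_normals_def)

lemma zero_notin_arr_normals: "arrangement A \<Longrightarrow> 0 \<notin> arr_normals A"
  unfolding arrangement_def arr_normals_def using hyperplane_normal(1) by fastforce

lemma mem_arrangement_hyperplane:
  "arrangement A \<Longrightarrow> H \<in> A \<Longrightarrow> z \<in> H \<longleftrightarrow> hyperplane_normal H \<bullet> z = 0"
  unfolding arrangement_def using hyperplane_normal(2) by blast

lemma Union_arrangement:
  "arrangement A \<Longrightarrow> \<Union>A = (\<Union>w\<in>arr_normals A. {z. w \<bullet> z = 0})"
  by (auto simp: arr_normals_def mem_arrangement_hyperplane)

lemma regions_eq:
  assumes "arrangement A"
  shows "regions A = closed_sign_cell (arr_normals A) ` {x. \<forall>w\<in>arr_normals A. w \<bullet> x \<noteq> 0}"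
proof -
  have "regions A = (\<lambda>x. closure (connected_component_set (- \<Union>A) x)) ` {x. x \<notin> \<Union>A}"
    by (auto simp: regions_def)
  also have "\<dots> = closed_sign_cell (arr_normals A) ` {x. \<forall>w\<in>arr_normals A. w \<bullet> x \<noteq> 0}"
  proof (rule image_cong)
    show "{x. x \<notin> \<Union>A} = {x. \<forall>w\<in>arr_normals A. w \<bullet> x \<noteq> 0}"
      using Union_arrangement[OF assms] by blast
    show "closure (connected_component_set (- \<Union>A) x) = closed_sign_cell (arr_normals A) x"
      if "x \<in> {x. \<forall>w\<in>arr_normals A. w \<bullet> x \<noteq> 0}" for x
      using that connected_component_sign_cell[of "arr_normals A" x] closure_sign_cell
      by (simp only: Union_arrangement[OF assms] mem_Collect_eq)
  qed
  finally show ?thesis .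
qed

lemma faces_eq:
  assumes "arrangement A"
  shows "faces A = range (closed_sign_cell (arr_normals A))"
proof
  show "faces A \<subseteq> range (closed_sign_cell (arr_normals A))"
  proof
    fix F assume "F \<in> faces A"
    then obtain x where "F face_of closed_sign_cell (arr_normals A) x" "F \<noteq> {}"
      by (auto simp: faces_def regions_eq[OF assms])
    then obtain y where "F = closed_sign_cell (arr_normals A) y"
      using face_of_closed_sign_cell_obtains[OF finite_arr_normals[OF assms]] by blast
    then show "F \<in> range (closed_sign_cell (arr_normals A))"
      by blast
  qed
  show "range (closed_sign_cell (arr_normals A)) \<subseteq> faces A"
  proof
    fix F assume "F \<in> range (closed_sign_cell (arr_normals A))"
    then obtain y where F: "F = closed_sign_cell (arr_normals A) y"
      by blast
    obtain g where "\<forall>w\<in>arr_normals A. w \<bullet> g \<noteq> 0"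
      using exists_generic_vector finite_arr_normals[OF assms] zero_notin_arr_normals[OF assms] by blast
    then obtain x where "\<forall>w\<in>arr_normals A. w \<bullet> x \<noteq> 0" and y: "y \<in> closed_sign_cell (arr_normals A) x"
      using closed_sign_cell_perturb finite_arr_normals[OF assms] by blast
    moreover have "y \<in> F"
      using F sign_cell_subset_closed_sign_cell sign_cell_self[of y UNIV] by blast
    ultimately show "F \<in> faces A"
      using face_of_closed_sign_cell[OF y] F by (auto simp: faces_def regions_eq[OF assms])
  qed
qed

lemma sum_faces_in_eq:
  assumes "arrangement A" "closed h"
  shows "(\<Sum>F\<in>faces_in A h. f (dim F)) = (\<Sum>C\<in>{C\<in>sign_cells (arr_normals A) UNIV. C \<subseteq> h}. f (dim C))"
proof -
  let ?S = "{C\<in>sign_cells (arr_normals A) UNIV. C \<subseteq> h}"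
  have "faces A = closure ` sign_cells (arr_normals A) UNIV"
    by (auto simp: faces_eq[OF assms(1)] sign_cells_def closure_sign_cell image_image)
  moreover have "closure C \<subseteq> h \<longleftrightarrow> C \<subseteq> h" for C
    using assms(2) closure_minimal closure_subset by blast
  ultimately have "faces_in A h = closure ` ?S"
    by (auto simp: faces_in_def)
  moreover have "inj_on closure ?S"
  proof (rule inj_onI)
    fix C D assume "C \<in> ?S" "D \<in> ?S" "closure C = closure D"
    then obtain x y where "C = sign_cell (arr_normals A) UNIV x" "D = sign_cell (arr_normals A) UNIV y"
      and "closed_sign_cell (arr_normals A) x = closed_sign_cell (arr_normals A) y"
      by (auto simp: sign_cells_def closure_sign_cell)
    then show "C = D"
      using closed_sign_cell_eqD by blast
  qed
  ultimately show ?thesis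
    by (simp add: sum.reindex)
qed

lemma subspace_flat:
  assumes "arrangement A" "X \<in> flats A"
  shows "subspace X"
proof -
  obtain B where "B \<subseteq> A" "X = \<Inter>B"
    using assms(2) by (auto simp: flats_def)
  moreover have "subspace H" if "H \<in> A" for H
    using assms(1) that hyperplane_normal(2)[of H] subspace_hyperplane
    by (metis arrangement_def)
  ultimately show ?thesis
    by (auto intro: subspace_Inter)
qed

lemma finite_flats: "arrangement A \<Longrightarrow> finite (flats A)"
proof -
  have "flats A = Inter ` Pow A"
    by (auto simp: flats_def)
  then show "arrangement A \<Longrightarrow> finite (flats A)"
    by (simp add: arrangement_def)
qed

lemma bot_flat_in_flats: "bot_flat A \<in> flats A"
  by (auto simp: flats_def bot_flat_def)

lemma UNIV_in_flats: "UNIV \<in> flats A"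
  unfolding flats_def by (rule CollectI, rule exI[of _ "{}"]) simp

lemma bot_flat_subset: "X \<in> flats A \<Longrightarrow> bot_flat A \<subseteq> X"
  by (auto simp: flats_def bot_flat_def)

lemma span_sign_cell_arrangement:
  assumes "arrangement A"
  shows "span (sign_cell (arr_normals A) UNIV y) = \<Inter>{H\<in>A. y \<in> H}"
  using span_sign_cell[OF finite_arr_normals[OF assms] subspace_UNIV UNIV_I]
  by (auto simp: arr_normals_def mem_arrangement_hyperplane[OF assms])

lemma span_in_flats:
  assumes "arrangement A" "C \<in> sign_cells (arr_normals A) UNIV"
  shows "span C \<in> flats A"
proof -
  obtain y where "C = sign_cell (arr_normals A) UNIV y"
    using assms(2) by (auto simp: sign_cells_def)
  then show ?thesis
    unfolding flats_def mem_Collect_eq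
    by (intro exI[of _ "{H\<in>A. y \<in> H}"]) (simp add: span_sign_cell_arrangement[OF assms(1)])
qed

lemma sign_cells_flat:
  assumes "arrangement A" "X \<in> flats A"
  shows "sign_cells (arr_normals A) X = {C\<in>sign_cells (arr_normals A) UNIV. C \<subseteq> X}"
proof -
  let ?N = "arr_normals A"
  obtain B where B: "B \<subseteq> A" "X = \<Inter>B"
    using assms(2) by (auto simp: flats_def)
  have sub: "sign_cell ?N UNIV x \<subseteq> X" if "x \<in> X" for x
  proof
    fix z assume z: "z \<in> sign_cell ?N UNIV x"
    have "z \<in> H" if "H \<in> B" for H
      using \<open>x \<in> X\<close> B that sign_cell_zero_iff[OF z, of "hyperplane_normal H"]
        mem_arrangement_hyperplane[OF assms(1)] by (auto simp: arr_normals_def)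
    then show "z \<in> X"
      using B(2) by blast
  qed
  then have "sign_cell ?N X x = sign_cell ?N UNIV x" if "x \<in> X" for x
    using that by (auto simp: sign_cell_def)
  then show ?thesis
    using sub sign_cell_self[of _ UNIV ?N] by (auto simp: sign_cells_def) blast
qed

lemma sign_cell_zero_arrangement:
  "arrangement A \<Longrightarrow> sign_cell (arr_normals A) UNIV 0 = bot_flat A"
  by (auto simp: sign_cell_def bot_flat_def arr_normals_def mem_arrangement_hyperplane sgn_0_0)

definition cell_count :: "'a::euclidean_space set set \<Rightarrow> 'a set \<Rightarrow> 'a set \<Rightarrow> nat" where
  "cell_count A h X = card {C\<in>sign_cells (arr_normals A) UNIV. C \<subseteq> h \<and> span C = X}"

lemma sum_cells_by_span:
  assumes "arrangement A" "X \<in> flats A"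
  shows "(\<Sum>C\<in>{C\<in>sign_cells (arr_normals A) UNIV. C \<subseteq> h \<and> C \<subseteq> X}. f (dim C))
           = (\<Sum>Y\<in>{Y\<in>flats A. Y \<subseteq> X}. of_nat (cell_count A h Y) * f (dim Y))"
proof -
  let ?S = "{C\<in>sign_cells (arr_normals A) UNIV. C \<subseteq> h \<and> C \<subseteq> X}"
  have X: "subspace X"
    by (rule subspace_flat[OF assms])
  have "span ` ?S \<subseteq> {Y\<in>flats A. Y \<subseteq> X}"
    using span_in_flats[OF assms(1)] span_minimal[OF _ X] by auto
  then have "(\<Sum>C\<in>?S. f (dim C)) = (\<Sum>Y\<in>{Y\<in>flats A. Y \<subseteq> X}. \<Sum>C\<in>{C\<in>?S. span C = Y}. f (dim C))"
    using finite_sign_cells[OF finite_arr_normals[OF assms(1)]] finite_flats[OF assms(1)]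
    by (intro sum.group[symmetric]) auto
  also have "\<dots> = (\<Sum>Y\<in>{Y\<in>flats A. Y \<subseteq> X}. of_nat (cell_count A h Y) * f (dim Y))"
  proof (rule sum.cong[OF refl])
    fix Y assume "Y \<in> {Y\<in>flats A. Y \<subseteq> X}"
    then have "{C\<in>?S. span C = Y} = {C\<in>sign_cells (arr_normals A) UNIV. C \<subseteq> h \<and> span C = Y}"
      using span_superset by blast
    moreover have "f (dim C) = f (dim Y)" if "span C = Y" for C :: "'a set"
      using that dim_span by metis
    ultimately show "(\<Sum>C\<in>{C\<in>?S. span C = Y}. f (dim C)) = of_nat (cell_count A h Y) * f (dim Y)"
      by (simp add: cell_count_def)
  qed
  finally show ?thesis .
qed

lemma cell_count_bot_flat:
  assumes "arrangement A" "bot_flat A \<subseteq> h"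
  shows "cell_count A h (bot_flat A) = 1"
proof -
  let ?N = "arr_normals A"
  have "{C\<in>sign_cells ?N UNIV. C \<subseteq> h \<and> span C = bot_flat A} = {bot_flat A}"
  proof
    show "{C\<in>sign_cells ?N UNIV. C \<subseteq> h \<and> span C = bot_flat A} \<subseteq> {bot_flat A}"
    proof
      fix C assume C: "C \<in> {C\<in>sign_cells ?N UNIV. C \<subseteq> h \<and> span C = bot_flat A}"
      then obtain y where y: "C = sign_cell ?N UNIV y"
        by (auto simp: sign_cells_def)
      then have "y \<in> sign_cell ?N UNIV 0"
        using C span_superset sign_cell_self[of y UNIV ?N] sign_cell_zero_arrangement[OF assms(1)] by blast
      then have "C = sign_cell ?N UNIV 0"
        using y sign_cell_eq by metis
      then show "C \<in> {bot_flat A}"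
        using sign_cell_zero_arrangement[OF assms(1)] by simp
    qed
    have "span (bot_flat A) = bot_flat A"
      using subspace_flat[OF assms(1) bot_flat_in_flats] by (simp add: span_eq_iff)
    then show "{bot_flat A} \<subseteq> {C\<in>sign_cells ?N UNIV. C \<subseteq> h \<and> span C = bot_flat A}"
      using assms(2) sign_cell_zero_arrangement[OF assms(1)] by (auto simp: sign_cells_def)
  qed
  then show ?thesis
    by (simp add: cell_count_def)
qed

lemma alternating_cell_count:
  assumes "arrangement A" "X \<in> flats A" "\<not> X \<subseteq> {z. a \<bullet> z = 0}"
  shows "(\<Sum>Y\<in>{Y\<in>flats A. Y \<subseteq> X}. int (cell_count A {z. a \<bullet> z \<ge> 0} Y) * (-1) ^ dim Y) = 0"
proof -
  let ?N = "arr_normals A"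
  have X: "subspace X"
    by (rule subspace_flat[OF assms(1,2)])
  obtain v where "v \<in> X" "a \<bullet> v < 0"
  proof -
    obtain u where "u \<in> X" "a \<bullet> u \<noteq> 0"
      using assms(3) by blast
    then show ?thesis
      using that[of u] that[of "- u"] subspace_neg[OF X] by (cases "a \<bullet> u < 0") auto
  qed
  then have "0 = (\<Sum>C\<in>sign_cells ?N X. euler_weight a C)"
    using sum_euler_weight_sign_cells[OF finite_arr_normals[OF assms(1)] X] by simp
  also have "\<dots> = (\<Sum>C\<in>{C\<in>{C\<in>sign_cells ?N UNIV. C \<subseteq> X}. C \<subseteq> {z. a \<bullet> z \<ge> 0}}. (-1) ^ dim C)"
    using finite_sign_cells[OF finite_arr_normals[OF assms(1)]]
    by (simp add: sign_cells_flat[OF assms(1,2)] euler_weight_def sum.inter_filter if_if_eq_conj)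
  also have "\<dots> = (\<Sum>C\<in>{C\<in>sign_cells ?N UNIV. C \<subseteq> {z. a \<bullet> z \<ge> 0} \<and> C \<subseteq> X}. (-1) ^ dim C)"
    by (rule sum.cong) auto
  also have "\<dots> = (\<Sum>Y\<in>{Y\<in>flats A. Y \<subseteq> X}. int (cell_count A {z. a \<bullet> z \<ge> 0} Y) * (-1) ^ dim Y)"
    by (rule sum_cells_by_span[OF assms(1,2), where f = "\<lambda>d. (-1) ^ d"])
  finally show ?thesis
    by (rule sym)
qed

lemma mobius_refl: "finite L \<Longrightarrow> b \<in> L \<Longrightarrow> mobius L b b = 1"
  by (subst mobius.simps) simp

lemma mobius_eqI:
  fixes L :: "'a set set" and g :: "'a set \<Rightarrow> int"
  assumes "finite L" "b \<in> L" "\<And>X. X \<in> L \<Longrightarrow> b \<subseteq> X" "g b = 1"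
    and "\<And>X. X \<in> L \<Longrightarrow> X \<noteq> b \<Longrightarrow> (\<Sum>Y\<in>{Y\<in>L. Y \<subseteq> X}. g Y) = 0"
    and "X \<in> L"
  shows "g X = mobius L b X"
proof -
  have "g X = mobius L b X" if "card {Y\<in>L. Y \<subset> X} = n" "X \<in> L" for n X
    using that
  proof (induction n arbitrary: X rule: less_induct)
    case (less n)
    show ?case
    proof (cases "X = b")
      case True
      then show ?thesis
        using assms(1,2,4) mobius_refl by metis
    next
      case False
      have IH: "g Y = mobius L b Y" if "Y \<in> L" "Y \<subset> X" for Y
      proof -
        have "{Z\<in>L. Z \<subset> Y} \<subseteq> {Z\<in>L. Z \<subset> X}" "Y \<in> {Z\<in>L. Z \<subset> X}" "Y \<notin> {Z\<in>L. Z \<subset> Y}"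
          using that by auto
        then have "card {Z\<in>L. Z \<subset> Y} < card {Z\<in>L. Z \<subset> X}"
          using assms(1) by (intro psubset_card_mono) auto
        then show ?thesis
          using less.IH[OF _ refl that(1)] less.prems(1) by simp
      qed
      have split: "{Y\<in>L. Y \<subseteq> X} = insert X {Y\<in>L. Y \<subset> X}" "{Y\<in>L. b \<subseteq> Y \<and> Y \<subset> X} = {Y\<in>L. Y \<subset> X}"
        using less.prems(2) assms(3) by auto
      have "g X = - (\<Sum>Y\<in>{Y\<in>L. Y \<subset> X}. g Y)"
        using assms(5)[OF less.prems(2) False] assms(1) by (simp add: split(1))
      also have "\<dots> = - (\<Sum>Y\<in>{Y\<in>L. Y \<subset> X}. mobius L b Y)"
        using IH by simp
      also have "\<dots> = mobius L b X"
        using assms(1,2,3) less.prems(2) False by (subst (2) mobius.simps) (simp add: split(2))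
      finally show ?thesis .
    qed
  qed
  then show ?thesis
    using assms(6) by blast
qed

lemma abs_mobius_eq_cell_count:
  assumes "arrangement A" "generic_hyperplane A {z. a \<bullet> z = 0}" "X \<in> flats A"
  shows "\<bar>mobius (flats A) (bot_flat A) X\<bar> = int (cell_count A {z. a \<bullet> z \<ge> 0} X)"
proof -
  let ?h = "{z. a \<bullet> z \<ge> 0}"
  let ?s = "(-1::int) ^ dim (bot_flat A)"
  define g where "g Y = ?s * (int (cell_count A ?h Y) * (-1) ^ dim Y)" for Y
  have "bot_flat A \<subseteq> ?h"
    using assms(2) by (auto simp: generic_hyperplane_def)
  then have g_bot: "g (bot_flat A) = 1"
    by (simp add: g_def cell_count_bot_flat[OF assms(1)] flip: power_mult_distrib)
  have g_sum: "(\<Sum>Y\<in>{Y\<in>flats A. Y \<subseteq> X}. g Y) = 0" if "X \<in> flats A" "X \<noteq> bot_flat A" for X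
  proof -
    have "\<not> X \<subseteq> {z. a \<bullet> z = 0}"
      using assms(2) that by (auto simp: generic_hyperplane_def)
    then show ?thesis
      using alternating_cell_count[OF assms(1) that(1)] by (simp add: g_def flip: sum_distrib_left)
  qed
  have "g X = mobius (flats A) (bot_flat A) X"
    by (rule mobius_eqI[OF finite_flats[OF assms(1)] bot_flat_in_flats bot_flat_subset g_bot g_sum assms(3)])
  moreover have "\<bar>g X\<bar> = int (cell_count A ?h X)"
    by (simp add: g_def abs_mult)
  ultimately show ?thesis
    by simp
qed

lemma h_poly_reciprocal:
  fixes \<Sigma> :: "'a::euclidean_space set set"
  assumes "z \<noteq> 0" "z \<noteq> 1"
  shows "z ^ DIM('a) * h_poly \<Sigma> (1 / z) = (\<Sum>F\<in>\<Sigma>. (z - 1) ^ (DIM('a) - dim F))"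
proof -
  have "z * (1 - 1 / z) = z - 1" "(1 / z) / (1 - 1 / z) = 1 / (z - 1)"
    using assms by (simp_all add: right_diff_distrib field_simps)
  then have "z ^ DIM('a) * h_poly \<Sigma> (1 / z) = (z - 1) ^ DIM('a) * (\<Sum>F\<in>\<Sigma>. (1 / (z - 1)) ^ dim F)"
    by (simp add: h_poly_def f_poly_def mult.assoc flip: power_mult_distrib)
  also have "\<dots> = (\<Sum>F\<in>\<Sigma>. (z - 1) ^ (DIM('a) - dim F))"
    unfolding sum_distrib_left
  proof (rule sum.cong[OF refl])
    fix F :: "'a set"
    show "(z - 1) ^ DIM('a) * (1 / (z - 1)) ^ dim F = (z - 1) ^ (DIM('a) - dim F)"
      using assms dim_subset_UNIV[of F] by (simp add: power_diff power_one_over)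
  qed
  finally show ?thesis .
qed

theorem proposition3p1:
  fixes A :: "'a::euclidean_space set set" and h :: "'a set"
  assumes "arrangement A" and "A \<noteq> {}" and "simplicial A"
    and "generic_halfspace A h"
  shows "\<forall>z::real. z \<noteq> 0 \<and> z \<noteq> 1 \<longrightarrow>
           prim_eulerian A z = z ^ DIM('a) * h_poly (faces_in A h) (1 / z)"
proof (intro allI impI)
  fix z :: real assume z: "z \<noteq> 0 \<and> z \<noteq> 1"
  obtain a c where h: "h = {x. a \<bullet> x \<ge> c}" and gen: "generic_hyperplane A {x. a \<bullet> x = c}"
    using assms(4) by (auto simp: generic_halfspace_def)
  have "0 \<in> bot_flat A"
    using assms(1) by (auto simp: bot_flat_def mem_arrangement_hyperplane)
  then have "c = 0"
    using gen by (auto simp: generic_hyperplane_def)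
  then have h0: "h = {x. a \<bullet> x \<ge> 0}" and gen0: "generic_hyperplane A {x. a \<bullet> x = 0}"
    using h gen by simp_all
  let ?f = "\<lambda>d. (z - 1) ^ (DIM('a) - d)"
  have "z ^ DIM('a) * h_poly (faces_in A h) (1 / z) = (\<Sum>F\<in>faces_in A h. ?f (dim F))"
    using z by (intro h_poly_reciprocal) auto
  also have "\<dots> = (\<Sum>C\<in>{C\<in>sign_cells (arr_normals A) UNIV. C \<subseteq> h}. ?f (dim C))"
    unfolding h0 by (rule sum_faces_in_eq[OF assms(1) closed_halfspace_ge, where f = ?f])
  also have "\<dots> = (\<Sum>X\<in>flats A. real (cell_count A h X) * ?f (dim X))"
    using sum_cells_by_span[OF assms(1) UNIV_in_flats, where f = ?f and h = h]
    by (simp only: subset_UNIV simp_thms Collect_mem_eq)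
  also have "\<dots> = prim_eulerian A z"
    unfolding prim_eulerian_def codim_def
  proof (rule sum.cong[OF refl])
    fix X assume "X \<in> flats A"
    then show "real (cell_count A h X) * ?f (dim X)
                 = real_of_int \<bar>mobius (flats A) (bot_flat A) X\<bar> * (z - 1) ^ (DIM('a) - dim X)"
      using abs_mobius_eq_cell_count[OF assms(1) gen0] h0 by simp
  qed
  finally show "prim_eulerian A z = z ^ DIM('a) * h_poly (faces_in A h) (1 / z)" ..
qed

end
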